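(* Let $(C,\chi)$ be a Hopf heap and $x\in C$ a group-like element. Then $\mathrm{H}_x(C)\cong\mathrm{Tn}^r C\cong\mathrm{Tn}^l C$ as bialgebras, via $a\mapsto\tau_x^a$ (with inverse $\tau_a^b\mapsto[x,a,b]$) and $a\mapsto\sigma^a_x$ respectively. Consequently $\mathrm{Tn}^r C$ and $\mathrm{Tn}^l C$ are Hopf algebras.
   Context: Work over a field $\mathbb{F}$; coalgebras coassociative, counital, nonzero, Sweedler notation; $C^{\mathrm{co}}$ co-opposite. A Hopf heap is a coalgebra $C$ with a coalgebra map $\chi:C\otimes C^{\mathrm{co}}\otimes C\to C$, $a\otimes b\otimes c\mapsto[a,b,c]$, with $[[a,b,c],d,e]=[a,b,[c,d,e]]$ and $\sum[c_{(1)},c_{(2)},a]=\sum[a,c_{(1)},c_{(2)}]=\varepsilon(c)a$. An element $x$ is group-like if $\Delta(x)=x\otimes x$, $\varepsilon(x)=1$. $\mathrm{H}_x(C)$ is the Hopf algebra with underlying coalgebra $C$, unit $x$, product $ab=[a,x,b]$ and antipode $S(a)=[x,a,x]$. $\mathrm{Tn}^rC$ is the span of right translations $\tau_a^b:c\mapsto[c,a,b]$, a bialgebra with product $\tau_a^b\tau_c^d=\tau_c^d\circ\tau_a^b=\tau_a^{[b,c,d]}$, unit $\mathrm{id}_C$, coproduct $\Delta(\tau_a^b)=\sum\tau_{a_{(2)}}^{b_{(1)}}\otimes\tau_{a_{(1)}}^{b_{(2)}}$, counit $\varepsilon(\tau_a^b)=\varepsilon(a)\varepsilon(b)$. $\mathrm{Tn}^lC$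 is the span of left translations $\sigma^a_b:c\mapsto[a,b,c]$, a bialgebra with product $\sigma^a_b\sigma^c_d=\sigma^a_b\circ\sigma^c_d=\sigma^{[a,b,c]}_d$, unit $\mathrm{id}_C$, coproduct $\Delta(\sigma^a_b)=\sum\sigma^{a_{(1)}}_{b_{(2)}}\otimes\sigma^{a_{(2)}}_{b_{(1)}}$, counit $\varepsilon(\sigma^a_b)=\varepsilon(a)\varepsilon(b)$. *)

theory Defs
  imports "HOL-Library.Poly_Mapping"
begin

text \<open>
  Every vector space over a field is (up to isomorphism) a free
  vector space on a basis.  We therefore model the underlying vector space of the
  coalgebra C as the space of finitely supported functions from 'b to 'k on a basis
  type 'b (which is nonempty, so C is nonzero).  Tensor products of such spaces are
  the finitely supported functions on the product of the basis types
  (finitely supported functions on 'b \<times> 'b model C \<otimes> C).  The structure maps (coproduct, counit, heap bracket)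
  are given on basis vectors and extended (multi)linearly.
\<close>

type_synonym ('b, 'k) vec = "'b \<Rightarrow>\<^sub>0 'k"

definition bvec :: "'b \<Rightarrow> ('b \<Rightarrow>\<^sub>0 'k::zero_neq_one)" where
  "bvec i = Poly_Mapping.single i 1"

definition smult :: "'k::semiring_0 \<Rightarrow> ('x \<Rightarrow>\<^sub>0 'k) \<Rightarrow> ('x \<Rightarrow>\<^sub>0 'k)" where
  "smult c v = Poly_Mapping.map (\<lambda>t. c * t) v"

definition tens :: "('x \<Rightarrow>\<^sub>0 'k::semiring_0) \<Rightarrow> ('y \<Rightarrow>\<^sub>0 'k) \<Rightarrow> ('x \<times> 'y \<Rightarrow>\<^sub>0 'k)" where
  "tens u v = sum (\<lambda>i. sum (\<lambda>j. Poly_Mapping.single (i, j) (Poly_Mapping.lookup u i * Poly_Mapping.lookup v j)) (Poly_Mapping.keys v)) (Poly_Mapping.keys u)"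

text \<open>Sweedler-type sum: for D = \<Sum> D(i,j) e_i \<otimes> e_j, the value \<Sum> D(i,j) F i j
  (i.e. the linear map C \<otimes> C \<rightarrow> X induced by a map F on basis pairs).\<close>
definition sw2 :: "('b \<times> 'b \<Rightarrow>\<^sub>0 'k::semiring_0) \<Rightarrow> ('b \<Rightarrow> 'b \<Rightarrow> ('x \<Rightarrow>\<^sub>0 'k)) \<Rightarrow> ('x \<Rightarrow>\<^sub>0 'k)" where
  "sw2 D F = (\<Sum>p\<in>Poly_Mapping.keys D. smult (Poly_Mapping.lookup D p) (F (fst p) (snd p)))"

definition cop :: "('b \<Rightarrow> ('b \<times> 'b \<Rightarrow>\<^sub>0 'k::semiring_0)) \<Rightarrow> ('b \<Rightarrow>\<^sub>0 'k) \<Rightarrow> ('b \<times> 'b \<Rightarrow>\<^sub>0 'k)" where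
  "cop \<Delta> v = (\<Sum>i\<in>Poly_Mapping.keys v. smult (Poly_Mapping.lookup v i) (\<Delta> i))"

definition cou :: "('b \<Rightarrow> 'k::semiring_0) \<Rightarrow> ('b \<Rightarrow>\<^sub>0 'k) \<Rightarrow> 'k" where
  "cou \<epsilon> v = (\<Sum>i\<in>Poly_Mapping.keys v. Poly_Mapping.lookup v i * \<epsilon> i)"

definition br :: "('b \<Rightarrow> 'b \<Rightarrow> 'b \<Rightarrow> ('b \<Rightarrow>\<^sub>0 'k::semiring_0))
    \<Rightarrow> ('b \<Rightarrow>\<^sub>0 'k) \<Rightarrow> ('b \<Rightarrow>\<^sub>0 'k) \<Rightarrow> ('b \<Rightarrow>\<^sub>0 'k) \<Rightarrow> ('b \<Rightarrow>\<^sub>0 'k)" where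
  "br \<chi> a b c = (\<Sum>i\<in>Poly_Mapping.keys a. \<Sum>j\<in>Poly_Mapping.keys b. \<Sum>k\<in>Poly_Mapping.keys c.
      smult (Poly_Mapping.lookup a i * Poly_Mapping.lookup b j * Poly_Mapping.lookup c k) (\<chi> i j k))"

definition coalgebra :: "('b \<Rightarrow> ('b \<times> 'b \<Rightarrow>\<^sub>0 'k::field)) \<Rightarrow> ('b \<Rightarrow> 'k) \<Rightarrow> bool" where
  "coalgebra \<Delta> \<epsilon> \<longleftrightarrow>
     (\<forall>i. sw2 (\<Delta> i) (\<lambda>j k. sw2 (\<Delta> j) (\<lambda>p q. Poly_Mapping.single (p, q, k) (1::'k)))
        = sw2 (\<Delta> i) (\<lambda>j k. sw2 (\<Delta> k) (\<lambda>p q. Poly_Mapping.single (j, p, q) 1))) \<and>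
     (\<forall>i. sw2 (\<Delta> i) (\<lambda>j k. smult (\<epsilon> j) (bvec k)) = bvec i) \<and>
     (\<forall>i. sw2 (\<Delta> i) (\<lambda>j k. smult (\<epsilon> k) (bvec j)) = bvec i)"

text \<open>Hopf heap: \<chi> : C \<otimes> C^co \<otimes> C \<rightarrow> C is a coalgebra map, associativity, herd laws.\<close>
definition hopf_heap :: "('b \<Rightarrow> ('b \<times> 'b \<Rightarrow>\<^sub>0 'k::field)) \<Rightarrow> ('b \<Rightarrow> 'k)
    \<Rightarrow> ('b \<Rightarrow> 'b \<Rightarrow> 'b \<Rightarrow> ('b \<Rightarrow>\<^sub>0 'k)) \<Rightarrow> bool" where
  "hopf_heap \<Delta> \<epsilon> \<chi> \<longleftrightarrow> coalgebra \<Delta> \<epsilon> \<and>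
     (\<forall>i j k. cop \<Delta> (\<chi> i j k) =
        sw2 (\<Delta> i) (\<lambda>i1 i2. sw2 (\<Delta> j) (\<lambda>j1 j2. sw2 (\<Delta> k) (\<lambda>k1 k2.
          tens (\<chi> i1 j2 k1) (\<chi> i2 j1 k2))))) \<and>
     (\<forall>i j k. cou \<epsilon> (\<chi> i j k) = \<epsilon> i * \<epsilon> j * \<epsilon> k) \<and>
     (\<forall>i j k l m. br \<chi> (\<chi> i j k) (bvec l) (bvec m) = br \<chi> (bvec i) (bvec j) (\<chi> k l m)) \<and>
     (\<forall>c a. sw2 (\<Delta> c) (\<lambda>p q. \<chi> p q a) = smult (\<epsilon> c) (bvec a)) \<and>
     (\<forall>c a. sw2 (\<Delta> c) (\<lambda>p q. \<chi> a p q) = smult (\<epsilon> c) (bvec a))"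

definition group_like :: "('b \<Rightarrow> ('b \<times> 'b \<Rightarrow>\<^sub>0 'k::field)) \<Rightarrow> ('b \<Rightarrow> 'k) \<Rightarrow> ('b \<Rightarrow>\<^sub>0 'k) \<Rightarrow> bool" where
  "group_like \<Delta> \<epsilon> x \<longleftrightarrow> cop \<Delta> x = tens x x \<and> cou \<epsilon> x = 1"

definition rtr :: "('b \<Rightarrow> 'b \<Rightarrow> 'b \<Rightarrow> ('b \<Rightarrow>\<^sub>0 'k::field)) \<Rightarrow> ('b \<Rightarrow>\<^sub>0 'k) \<Rightarrow> ('b \<Rightarrow>\<^sub>0 'k)
    \<Rightarrow> (('b \<Rightarrow>\<^sub>0 'k) \<Rightarrow> ('b \<Rightarrow>\<^sub>0 'k))" where
  "rtr \<chi> a b = (\<lambda>c. br \<chi> c a b)"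

definition ltr :: "('b \<Rightarrow> 'b \<Rightarrow> 'b \<Rightarrow> ('b \<Rightarrow>\<^sub>0 'k::field)) \<Rightarrow> ('b \<Rightarrow>\<^sub>0 'k) \<Rightarrow> ('b \<Rightarrow>\<^sub>0 'k)
    \<Rightarrow> (('b \<Rightarrow>\<^sub>0 'k) \<Rightarrow> ('b \<Rightarrow>\<^sub>0 'k))" where
  "ltr \<chi> a b = (\<lambda>c. br \<chi> a b c)"

definition rcomb :: "('b \<Rightarrow> 'b \<Rightarrow> 'b \<Rightarrow> ('b \<Rightarrow>\<^sub>0 'k::field)) \<Rightarrow> ('k \<times> ('b \<Rightarrow>\<^sub>0 'k) \<times> ('b \<Rightarrow>\<^sub>0 'k)) list
    \<Rightarrow> (('b \<Rightarrow>\<^sub>0 'k) \<Rightarrow> ('b \<Rightarrow>\<^sub>0 'k))" where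
  "rcomb \<chi> ps = (\<lambda>c. sum_list (map (\<lambda>(l, a, b). smult l (rtr \<chi> a b c)) ps))"

definition lcomb :: "('b \<Rightarrow> 'b \<Rightarrow> 'b \<Rightarrow> ('b \<Rightarrow>\<^sub>0 'k::field)) \<Rightarrow> ('k \<times> ('b \<Rightarrow>\<^sub>0 'k) \<times> ('b \<Rightarrow>\<^sub>0 'k)) list
    \<Rightarrow> (('b \<Rightarrow>\<^sub>0 'k) \<Rightarrow> ('b \<Rightarrow>\<^sub>0 'k))" where
  "lcomb \<chi> ps = (\<lambda>c. sum_list (map (\<lambda>(l, a, b). smult l (ltr \<chi> a b c)) ps))"

definition TnR :: "('b \<Rightarrow> 'b \<Rightarrow> 'b \<Rightarrow> ('b \<Rightarrow>\<^sub>0 'k::field)) \<Rightarrow> (('b \<Rightarrow>\<^sub>0 'k) \<Rightarrow> ('b \<Rightarrow>\<^sub>0 'k)) set" where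
  "TnR \<chi> = {f. \<exists>ps. f = rcomb \<chi> ps}"

definition TnL :: "('b \<Rightarrow> 'b \<Rightarrow> 'b \<Rightarrow> ('b \<Rightarrow>\<^sub>0 'k::field)) \<Rightarrow> (('b \<Rightarrow>\<^sub>0 'k) \<Rightarrow> ('b \<Rightarrow>\<^sub>0 'k)) set" where
  "TnL \<chi> = {f. \<exists>ps. f = lcomb \<chi> ps}"

text \<open>An element of End(C) \<otimes> End(C) is represented
  (injectively) by the operator it induces on C \<otimes> C; we record its value on the
  basis tensor e_c \<otimes> e_d.\<close>
definition rcoprod :: "('b \<Rightarrow> ('b \<times> 'b \<Rightarrow>\<^sub>0 'k::field)) \<Rightarrow> ('b \<Rightarrow> 'b \<Rightarrow> 'b \<Rightarrow> ('b \<Rightarrow>\<^sub>0 'k))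
    \<Rightarrow> ('k \<times> ('b \<Rightarrow>\<^sub>0 'k) \<times> ('b \<Rightarrow>\<^sub>0 'k)) list \<Rightarrow> 'b \<Rightarrow> 'b \<Rightarrow> ('b \<times> 'b \<Rightarrow>\<^sub>0 'k)" where
  "rcoprod \<Delta> \<chi> ps c d = sum_list (map (\<lambda>(l, a, b). smult l
      (sw2 (cop \<Delta> a) (\<lambda>a1 a2. sw2 (cop \<Delta> b) (\<lambda>b1 b2.
         tens (rtr \<chi> (bvec a2) (bvec b1) (bvec c)) (rtr \<chi> (bvec a1) (bvec b2) (bvec d)))))) ps)"

definition lcoprod :: "('b \<Rightarrow> ('b \<times> 'b \<Rightarrow>\<^sub>0 'k::field)) \<Rightarrow> ('b \<Rightarrow> 'b \<Rightarrow> 'b \<Rightarrow> ('b \<Rightarrow>\<^sub>0 'k))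
    \<Rightarrow> ('k \<times> ('b \<Rightarrow>\<^sub>0 'k) \<times> ('b \<Rightarrow>\<^sub>0 'k)) list \<Rightarrow> 'b \<Rightarrow> 'b \<Rightarrow> ('b \<times> 'b \<Rightarrow>\<^sub>0 'k)" where
  "lcoprod \<Delta> \<chi> ps c d = sum_list (map (\<lambda>(l, a, b). smult l
      (sw2 (cop \<Delta> a) (\<lambda>a1 a2. sw2 (cop \<Delta> b) (\<lambda>b1 b2.
         tens (ltr \<chi> (bvec a1) (bvec b2) (bvec c)) (ltr \<chi> (bvec a2) (bvec b1) (bvec d)))))) ps)"

definition tcounit :: "('b \<Rightarrow> 'k::field) \<Rightarrow> ('k \<times> ('b \<Rightarrow>\<^sub>0 'k) \<times> ('b \<Rightarrow>\<^sub>0 'k)) list \<Rightarrow> 'k" where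
  "tcounit \<epsilon> ps = sum_list (map (\<lambda>(l, a, b). l * cou \<epsilon> a * cou \<epsilon> b) ps)"

definition op_linear_on :: "(('b \<Rightarrow>\<^sub>0 'k::field) \<Rightarrow> ('b \<Rightarrow>\<^sub>0 'k)) set
    \<Rightarrow> ((('b \<Rightarrow>\<^sub>0 'k) \<Rightarrow> ('b \<Rightarrow>\<^sub>0 'k)) \<Rightarrow> (('b \<Rightarrow>\<^sub>0 'k) \<Rightarrow> ('b \<Rightarrow>\<^sub>0 'k))) \<Rightarrow> bool" where
  "op_linear_on T S \<longleftrightarrow>
     (\<forall>f\<in>T. \<forall>g\<in>T. S (\<lambda>c. f c + g c) = (\<lambda>c. S f c + S g c)) \<and>
     (\<forall>f\<in>T. \<forall>l. S (\<lambda>c. smult l (f c)) = (\<lambda>c. smult l (S f c)))"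

end

theory Submission
  imports Defs
begin

text \<open>
  Let \<open>x\<close> be group-like.  The herd laws give \<open>[a,x,x] = a = [x,x,a]\<close>, hence by associativity
  \<open>[c,x,[x,a,b]] = [c,a,b]\<close>: every right translation \<open>\<tau>_a^b\<close> equals \<open>\<tau>_x^{[x,a,b]}\<close>, and
  \<open>a \<mapsto> \<tau>_x^a\<close> is injective because \<open>\<tau>_x^a x = a\<close>.  So \<open>a \<mapsto> \<tau>_x^a\<close> is a linear bijection
  \<open>C \<rightarrow> Tn^r C\<close> with inverse \<open>\<tau>_a^b \<mapsto> [x,a,b]\<close>; associativity makes it multiplicative, and
  since \<open>\<chi>\<close> is a coalgebra map, \<open>\<Delta>[x,a,b] = \<Sum> [x,a_(2),b_(1)] \<otimes> [x,a_(1),b_(2)]\<close>, which is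
  exactly the coproduct of \<open>\<tau>_a^b\<close>.  Transporting the antipode \<open>a \<mapsto> [x,a,x]\<close> of \<open>H_x(C)\<close>
  along the bijection gives an antipode of \<open>Tn^r C\<close>; after normalising brackets the antipode
  identities reduce to the herd laws.  Left translations \<open>a \<mapsto> \<sigma>^a_x\<close> are symmetric.  Since
  the structure maps are given on basis vectors, every identity is checked there and extended
  by multilinearity.
\<close>

section \<open>Linear maps between spaces of finitely supported functions\<close>

lemma lookup_smult [simp]:
  "Poly_Mapping.lookup (smult c v) i = c * Poly_Mapping.lookup v i"
  by (simp add: smult_def Poly_Mapping.map.rep_eq when_def)

lemma smult_add_right: "smult (c::'k::field) (u + v) = smult c u + smult c v"
  by (rule poly_mapping_eqI) (simp add: lookup_add distrib_left)

lemma smult_add_left: "smult ((c::'k::field) + d) v = smult c v + smult d v"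
  by (rule poly_mapping_eqI) (simp add: lookup_add distrib_right)

lemma smult_smult [simp]: "smult (c::'k::field) (smult d v) = smult (c * d) v"
  by (rule poly_mapping_eqI) (simp add: mult.assoc)

lemma smult_one [simp]: "smult (1::'k::field) v = v"
  by (rule poly_mapping_eqI) simp

lemma smult_zero_left [simp]: "smult (0::'k::field) v = 0"
  by (rule poly_mapping_eqI) simp

lemma smult_sum: "smult (c::'k::field) (sum f A) = (\<Sum>a\<in>A. smult c (f a))"
  by (rule poly_mapping_eqI) (simp add: lookup_sum sum_distrib_left)

lemma smult_single:
  "smult (c::'k::field) (Poly_Mapping.single i d) = Poly_Mapping.single i (c * d)"
  by (rule poly_mapping_eqI) (simp add: lookup_single when_def)

lemma keys_smult_subset: "Poly_Mapping.keys (smult (c::'k::field) v) \<subseteq> Poly_Mapping.keys v"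
  by (auto simp: in_keys_iff)

definition lin_extend ::
    "('a \<Rightarrow> ('x \<Rightarrow>\<^sub>0 'k::field)) \<Rightarrow> ('a \<Rightarrow>\<^sub>0 'k) \<Rightarrow> ('x \<Rightarrow>\<^sub>0 'k)" where
  "lin_extend F v = (\<Sum>i\<in>Poly_Mapping.keys v. smult (Poly_Mapping.lookup v i) (F i))"

lemma lin_extend_superset:
  "finite S \<Longrightarrow> Poly_Mapping.keys v \<subseteq> S \<Longrightarrow>
    lin_extend F v = (\<Sum>i\<in>S. smult (Poly_Mapping.lookup v i) (F i))"
  unfolding lin_extend_def by (rule sum.mono_neutral_left) (auto simp: in_keys_iff)

lemma lin_extend_add: "lin_extend F (u + v) = lin_extend F u + lin_extend F v"
proof -
  let ?S = "Poly_Mapping.keys u \<union> Poly_Mapping.keys v"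
  have "finite ?S" "Poly_Mapping.keys (u + v) \<subseteq> ?S"
    by (simp_all add: keys_add)
  then show ?thesis
    using lin_extend_superset[of ?S _ F]
    by (simp add: lookup_add smult_add_left sum.distrib)
qed

lemma lin_extend_smult: "lin_extend F (smult c v) = smult c (lin_extend F v)"
  using lin_extend_superset[of "Poly_Mapping.keys v" "smult c v" F] keys_smult_subset[of c v]
  by (simp add: lin_extend_def smult_sum)

lemma lin_extend_bvec [simp]: "lin_extend F (bvec i) = F i"
  using lin_extend_superset[of "{i}" "bvec i" F] by (simp add: bvec_def)

lemma lin_extend_fun_add: "lin_extend (\<lambda>i. F i + G i) v = lin_extend F v + lin_extend G v"
  by (simp add: lin_extend_def smult_add_right sum.distrib)

lemma lin_extend_fun_smult: "lin_extend (\<lambda>i. smult c (F i)) v = smult c (lin_extend F v)"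
  by (simp add: lin_extend_def smult_sum mult.commute)

lemma lin_extend_bvec_id: "lin_extend bvec v = v"
proof (rule poly_mapping_eqI)
  fix k
  have "\<And>i. Poly_Mapping.lookup v i * (1 when i = k) = (Poly_Mapping.lookup v i when i = k)"
    by (simp add: when_def)
  then show "Poly_Mapping.lookup (lin_extend bvec v) k = Poly_Mapping.lookup v k"
    by (simp add: lin_extend_def lookup_sum bvec_def lookup_single in_keys_iff when_def)
qed

definition fs_linear :: "(('a \<Rightarrow>\<^sub>0 'k::field) \<Rightarrow> ('x \<Rightarrow>\<^sub>0 'k)) \<Rightarrow> bool" where
  "fs_linear L \<longleftrightarrow> (\<forall>u v. L (u + v) = L u + L v) \<and> (\<forall>c v. L (smult c v) = smult c (L v))"

lemma fs_linearI:
  "(\<And>u v. L (u + v) = L u + L v) \<Longrightarrow> (\<And>c v. L (smult c v) = smult c (L v)) \<Longrightarrow> fs_linear L"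
  by (simp add: fs_linear_def)

lemma fs_linear_map_add: "fs_linear L \<Longrightarrow> L (u + v) = L u + L v"
  by (simp add: fs_linear_def)

lemma fs_linear_map_smult: "fs_linear L \<Longrightarrow> L (smult c v) = smult c (L v)"
  by (simp add: fs_linear_def)

lemma fs_linear_map_zero: "fs_linear L \<Longrightarrow> L 0 = 0"
  using fs_linear_map_smult[of L 0 0] by simp

lemma fs_linear_map_sum: "fs_linear L \<Longrightarrow> L (sum f A) = (\<Sum>a\<in>A. L (f a))"
  by (induction A rule: infinite_finite_induct) (simp_all add: fs_linear_map_zero fs_linear_map_add)

lemma fs_linear_map_lin_extend:
  "fs_linear L \<Longrightarrow> L (lin_extend F v) = lin_extend (\<lambda>i. L (F i)) v"
  by (simp add: lin_extend_def fs_linear_map_sum fs_linear_map_smult)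

lemma fs_linear_map_sum_list:
  "fs_linear L \<Longrightarrow>
    L (\<Sum>(l, a, b)\<leftarrow>ps. smult l (g a b)) = (\<Sum>(l, a, b)\<leftarrow>ps. smult l (L (g a b)))"
  by (induction ps) (auto simp: fs_linear_map_zero fs_linear_map_add fs_linear_map_smult)

lemma fs_linear_eq_lin_extend: "fs_linear L \<Longrightarrow> L v = lin_extend (\<lambda>i. L (bvec i)) v"
  using fs_linear_map_lin_extend[of L bvec v] by (simp add: lin_extend_bvec_id)

lemma fs_linear_eqI:
  "(\<And>i. L (bvec i) = M (bvec i)) \<Longrightarrow> fs_linear L \<Longrightarrow> fs_linear M \<Longrightarrow> L v = M v"
  using fs_linear_eq_lin_extend[of L v] fs_linear_eq_lin_extend[of M v] by simp

lemma fs_bilinear_eqI: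
  assumes "\<And>i j. F (bvec i) (bvec j) = G (bvec i) (bvec j)"
    and "\<And>v. fs_linear (\<lambda>u. F u v)" "\<And>u. fs_linear (F u)"
    and "\<And>v. fs_linear (\<lambda>u. G u v)" "\<And>u. fs_linear (G u)"
  shows "F u v = G u v"
proof -
  have "F (bvec i) v = G (bvec i) v" for i
    by (rule fs_linear_eqI[OF assms(1,3,5)])
  then show ?thesis
    by (rule fs_linear_eqI[of "\<lambda>u. F u v" "\<lambda>u. G u v", OF _ assms(2,4)])
qed

lemma fs_trilinear_eqI:
  assumes "\<And>i j k. F (bvec i) (bvec j) (bvec k) = G (bvec i) (bvec j) (bvec k)"
    and "\<And>v w. fs_linear (\<lambda>u. F u v w)" "\<And>u w. fs_linear (\<lambda>v. F u v w)"
      "\<And>u v. fs_linear (F u v)"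
    and "\<And>v w. fs_linear (\<lambda>u. G u v w)" "\<And>u w. fs_linear (\<lambda>v. G u v w)"
      "\<And>u v. fs_linear (G u v)"
  shows "F u v w = G u v w"
proof -
  have "F (bvec i) v w = G (bvec i) v w" for i
    by (rule fs_bilinear_eqI[of "F (bvec i)" "G (bvec i)", OF assms(1,3,4,6,7)])
  then show ?thesis
    by (rule fs_linear_eqI[of "\<lambda>u. F u v w" "\<lambda>u. G u v w", OF _ assms(2,5)])
qed

definition fs_functional :: "(('a \<Rightarrow>\<^sub>0 'k::field) \<Rightarrow> 'k) \<Rightarrow> bool" where
  "fs_functional f \<longleftrightarrow> (\<forall>u v. f (u + v) = f u + f v) \<and> (\<forall>c v. f (smult c v) = c * f v)"

lemma fs_linear_single_functional:
  "fs_functional f \<Longrightarrow> fs_linear (\<lambda>v. Poly_Mapping.single () (f v))"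
  by (intro fs_linearI) (simp_all add: fs_functional_def single_add smult_single)

lemma fs_functional_eqI:
  assumes "\<And>i. f (bvec i) = g (bvec i)" "fs_functional f" "fs_functional g"
  shows "f v = g v"
proof -
  have "Poly_Mapping.single () (f v) = Poly_Mapping.single () (g v)"
    by (rule fs_linear_eqI[OF _ fs_linear_single_functional[OF assms(2)]
          fs_linear_single_functional[OF assms(3)]])
      (simp add: assms(1))
  then show ?thesis
    by (metis lookup_single_eq)
qed

lemma fs_functional_map_sum_list:
  "fs_functional f \<Longrightarrow>
    f (\<Sum>(l, a, b)\<leftarrow>ps. smult l (g a b)) = (\<Sum>(l, a, b)\<leftarrow>ps. l * f (g a b))"
  by (induction ps) (auto simp: fs_functional_def dest: spec[of _ 0])

lemma fs_functional_comp: "fs_functional f \<Longrightarrow> fs_linear L \<Longrightarrow> fs_functional (\<lambda>v. f (L v))"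
  by (simp add: fs_functional_def fs_linear_map_add fs_linear_map_smult)

lemma fs_functional_mult_left: "fs_functional f \<Longrightarrow> fs_functional (\<lambda>v. c * f v)"
  by (simp add: fs_functional_def distrib_left mult.left_commute)

lemma fs_functional_mult_right: "fs_functional f \<Longrightarrow> fs_functional (\<lambda>v. f v * c)"
  by (simp add: fs_functional_def distrib_right)

lemma cou_eq_lin_extend:
  "cou \<epsilon> v = Poly_Mapping.lookup (lin_extend (\<lambda>i. Poly_Mapping.single () (\<epsilon> i)) v) ()"
  by (simp add: cou_def lin_extend_def lookup_sum)

lemma fs_functional_cou: "fs_functional (cou \<epsilon>)"
  by (simp add: fs_functional_def cou_eq_lin_extend lin_extend_add lin_extend_smult lookup_add)

lemma fs_linear_smult_const: "fs_linear (\<lambda>v. smult c v)"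
  by (rule fs_linearI) (simp_all add: smult_add_right mult.commute)

lemma fs_linear_smult_functional: "fs_functional f \<Longrightarrow> fs_linear (\<lambda>v. smult (f v) a)"
  by (rule fs_linearI) (simp_all add: fs_functional_def smult_add_left)

lemma fs_linear_lin_extend: "fs_linear (lin_extend F)"
  by (rule fs_linearI) (simp_all add: lin_extend_add lin_extend_smult)

lemma fs_linear_lin_extend_fun:
  "(\<And>i. fs_linear (G i)) \<Longrightarrow> fs_linear (\<lambda>v. lin_extend (\<lambda>i. G i v) w)"
  by (rule fs_linearI)
    (simp_all add: fs_linear_map_add fs_linear_map_smult lin_extend_fun_add lin_extend_fun_smult)

lemma fs_linear_comp: "fs_linear L \<Longrightarrow> fs_linear M \<Longrightarrow> fs_linear (\<lambda>v. L (M v))"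
  by (rule fs_linearI) (simp_all add: fs_linear_map_add fs_linear_map_smult)

lemma fs_linear_lin_extend_comp: "fs_linear L \<Longrightarrow> fs_linear (\<lambda>v. lin_extend F (L v))"
  by (rule fs_linear_comp[OF fs_linear_lin_extend])

lemma cop_eq_lin_extend: "cop \<Delta> v = lin_extend \<Delta> v"
  by (simp add: cop_def lin_extend_def)

lemma sw2_eq_lin_extend: "sw2 D F = lin_extend (\<lambda>p. F (fst p) (snd p)) D"
  by (simp add: sw2_def lin_extend_def)

lemma br_eq_lin_extend:
  "br \<chi> a b c = lin_extend (\<lambda>i. lin_extend (\<lambda>j. lin_extend (\<lambda>k. \<chi> i j k) c) b) a"
  by (simp add: br_def lin_extend_def smult_sum mult.assoc)

lemma tens_eq_lin_extend: "tens u v = lin_extend (\<lambda>i. lin_extend (\<lambda>j. bvec (i, j)) v) u"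
  by (simp add: tens_def lin_extend_def smult_sum bvec_def smult_single)

lemma br_bvec [simp]: "br \<chi> (bvec i) (bvec j) (bvec k) = (\<chi> i j k :: _ \<Rightarrow>\<^sub>0 'k::field)"
  by (simp add: br_eq_lin_extend)

lemma cop_bvec [simp]: "cop \<Delta> (bvec i) = (\<Delta> i :: _ \<Rightarrow>\<^sub>0 'k::field)"
  by (simp add: cop_eq_lin_extend)

lemma cou_bvec [simp]: "cou \<epsilon> (bvec i) = (\<epsilon> i :: 'k::field)"
  by (simp add: cou_eq_lin_extend)

lemma tens_bvec [simp]: "tens (bvec i) (bvec j) = (bvec (i, j) :: _ \<Rightarrow>\<^sub>0 'k::field)"
  by (simp add: tens_eq_lin_extend)

lemma sw2_bvec [simp]: "sw2 (bvec p) F = (F (fst p) (snd p) :: _ \<Rightarrow>\<^sub>0 'k::field)"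
  by (simp add: sw2_eq_lin_extend)

lemma fs_linear_br_left: "fs_linear L \<Longrightarrow> fs_linear (\<lambda>v. br \<chi> (L v) b c)"
  unfolding br_eq_lin_extend by (intro fs_linear_lin_extend_fun fs_linear_lin_extend_comp)

lemma fs_linear_br_middle: "fs_linear L \<Longrightarrow> fs_linear (\<lambda>v. br \<chi> a (L v) c)"
  unfolding br_eq_lin_extend by (intro fs_linear_lin_extend_fun fs_linear_lin_extend_comp)

lemma fs_linear_br_right: "fs_linear L \<Longrightarrow> fs_linear (\<lambda>v. br \<chi> a b (L v))"
  unfolding br_eq_lin_extend by (intro fs_linear_lin_extend_fun fs_linear_lin_extend_comp)

lemma fs_linear_tens_left: "fs_linear L \<Longrightarrow> fs_linear (\<lambda>v. tens (L v) b)"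
  unfolding tens_eq_lin_extend by (intro fs_linear_lin_extend_fun fs_linear_lin_extend_comp)

lemma fs_linear_tens_right: "fs_linear L \<Longrightarrow> fs_linear (\<lambda>v. tens a (L v))"
  unfolding tens_eq_lin_extend by (intro fs_linear_lin_extend_fun fs_linear_lin_extend_comp)

lemma fs_linear_cop: "fs_linear L \<Longrightarrow> fs_linear (\<lambda>v. cop \<Delta> (L v))"
  unfolding cop_eq_lin_extend by (intro fs_linear_lin_extend_fun fs_linear_lin_extend_comp)

lemma fs_linear_sw2_left: "fs_linear L \<Longrightarrow> fs_linear (\<lambda>v. sw2 (L v) F)"
  unfolding sw2_eq_lin_extend by (intro fs_linear_lin_extend_fun fs_linear_lin_extend_comp)

lemma fs_linear_sw2_right:
  "(\<And>p q. fs_linear (F p q)) \<Longrightarrow> fs_linear (\<lambda>v. sw2 D (\<lambda>p q. F p q v))"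
  unfolding sw2_eq_lin_extend by (intro fs_linear_lin_extend_fun) auto

lemma fs_linear_id: "fs_linear (\<lambda>v. v)"
  by (rule fs_linearI) simp_all

lemmas fs_linear_intros = fs_linear_id fs_linear_smult_const fs_linear_br_left fs_linear_br_middle
  fs_linear_br_right fs_linear_tens_left fs_linear_tens_right fs_linear_cop fs_linear_sw2_left
  fs_linear_sw2_right

lemma fs_linear_map_sw2: "fs_linear L \<Longrightarrow> L (sw2 D F) = sw2 D (\<lambda>p q. L (F p q))"
  unfolding sw2_eq_lin_extend by (simp add: fs_linear_map_lin_extend)

lemma sw2_sw2: "sw2 (sw2 D F) G = sw2 D (\<lambda>p q. sw2 (F p q) G :: _ \<Rightarrow>\<^sub>0 'k::field)"
  by (rule fs_linear_map_sw2) (intro fs_linear_intros)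

lemma sw2_tens_bilinear:
  assumes "\<And>v. fs_linear (\<lambda>u. G u v)" "\<And>u. fs_linear (\<lambda>v. G u v)"
  shows "sw2 (tens u v) (\<lambda>p q. G (bvec p) (bvec q)) = G u v"
  by (rule fs_bilinear_eqI[where F="\<lambda>u v. sw2 (tens u v) (\<lambda>p q. G (bvec p) (bvec q))"])
    (auto intro!: fs_linear_intros assms)

lemma sw2_tens_tens:
  "fs_linear L \<Longrightarrow> fs_linear M \<Longrightarrow>
    sw2 (tens u v) (\<lambda>i j. tens (L (bvec i)) (M (bvec j))) = tens (L u) (M v)"
  by (rule sw2_tens_bilinear[where G="\<lambda>u v. tens (L u) (M v)"]) (auto intro!: fs_linear_intros)

section \<open>Hopf heaps\<close>

locale hopf_heap_struct =
  fixes \<Delta> :: "'b \<Rightarrow> ('b \<times> 'b \<Rightarrow>\<^sub>0 'k::field)" and \<epsilon> :: "'b \<Rightarrow> 'k"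
    and \<chi> :: "'b \<Rightarrow> 'b \<Rightarrow> 'b \<Rightarrow> ('b \<Rightarrow>\<^sub>0 'k)"
  assumes hopf_heap: "hopf_heap \<Delta> \<epsilon> \<chi>"
begin

lemma bracket_assoc: "br \<chi> (br \<chi> a b c) d e = br \<chi> a b (br \<chi> c d e)"
proof -
  have "br \<chi> (br \<chi> a b c) (bvec l) (bvec m) = br \<chi> a b (br \<chi> c (bvec l) (bvec m))" for l m
  proof (rule fs_trilinear_eqI[where F="\<lambda>a b c. br \<chi> (br \<chi> a b c) (bvec l) (bvec m)"])
    show "br \<chi> (br \<chi> (bvec i) (bvec j) (bvec k)) (bvec l) (bvec m)
      = br \<chi> (bvec i) (bvec j) (br \<chi> (bvec k) (bvec l) (bvec m))" for i j k
      using hopf_heap by (simp add: hopf_heap_def)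
  qed (intro fs_linear_intros)+
  then show ?thesis
    by (rule fs_bilinear_eqI[where F="\<lambda>d e. br \<chi> (br \<chi> a b c) d e"]) (intro fs_linear_intros)+
qed

lemma bracket_herd_left: "sw2 (cop \<Delta> c) (\<lambda>p q. br \<chi> (bvec p) (bvec q) a) = smult (cou \<epsilon> c) a"
proof (rule fs_bilinear_eqI[where F="\<lambda>c a. sw2 (cop \<Delta> c) (\<lambda>p q. br \<chi> (bvec p) (bvec q) a)"])
  show "sw2 (cop \<Delta> (bvec i)) (\<lambda>p q. br \<chi> (bvec p) (bvec q) (bvec j)) = smult (cou \<epsilon> (bvec i)) (bvec j)"
    for i j
    using hopf_heap by (simp add: hopf_heap_def)
qed (intro fs_linear_intros fs_linear_smult_functional fs_functional_cou)+

lemma bracket_herd_right: "sw2 (cop \<Delta> c) (\<lambda>p q. br \<chi> a (bvec p) (bvec q)) = smult (cou \<epsilon> c) a"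
proof (rule fs_bilinear_eqI[where F="\<lambda>c a. sw2 (cop \<Delta> c) (\<lambda>p q. br \<chi> a (bvec p) (bvec q))"])
  show "sw2 (cop \<Delta> (bvec i)) (\<lambda>p q. br \<chi> (bvec j) (bvec p) (bvec q)) = smult (cou \<epsilon> (bvec i)) (bvec j)"
    for i j
    using hopf_heap by (simp add: hopf_heap_def)
qed (intro fs_linear_intros fs_linear_smult_functional fs_functional_cou)+

lemma cop_bracket:
  "cop \<Delta> (br \<chi> u v w) = sw2 (cop \<Delta> u) (\<lambda>u1 u2. sw2 (cop \<Delta> v) (\<lambda>v1 v2. sw2 (cop \<Delta> w) (\<lambda>w1 w2.
     tens (br \<chi> (bvec u1) (bvec v2) (bvec w1)) (br \<chi> (bvec u2) (bvec v1) (bvec w2)))))"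
  by (rule fs_trilinear_eqI[where F="\<lambda>u v w. cop \<Delta> (br \<chi> u v w)"])
    (use hopf_heap in \<open>auto intro!: fs_linear_intros simp: hopf_heap_def\<close>)

lemma cou_bracket: "cou \<epsilon> (br \<chi> a b c) = cou \<epsilon> a * cou \<epsilon> b * cou \<epsilon> c"
proof -
  note functional_intros = fs_functional_comp[OF fs_functional_cou] fs_linear_intros
    fs_functional_mult_left fs_functional_mult_right fs_functional_cou
  have "cou \<epsilon> (br \<chi> (bvec i) (bvec j) c) = cou \<epsilon> (bvec i) * cou \<epsilon> (bvec j) * cou \<epsilon> c" for i j
  proof (rule fs_functional_eqI)
    show "cou \<epsilon> (br \<chi> (bvec i) (bvec j) (bvec k)) = cou \<epsilon> (bvec i) * cou \<epsilon> (bvec j) * cou \<epsilon> (bvec k)"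
      for k
      using hopf_heap by (simp add: hopf_heap_def)
  qed (intro functional_intros)+
  then have "cou \<epsilon> (br \<chi> (bvec i) b c) = cou \<epsilon> (bvec i) * cou \<epsilon> b * cou \<epsilon> c" for i
    by (rule fs_functional_eqI[where f="\<lambda>b. cou \<epsilon> (br \<chi> (bvec i) b c)"]) (intro functional_intros)+
  then show ?thesis
    by (rule fs_functional_eqI[where f="\<lambda>a. cou \<epsilon> (br \<chi> a b c)"]) (intro functional_intros)+
qed

end

section \<open>Translations by a group-like element\<close>

locale pointed_hopf_heap = hopf_heap_struct +
  fixes x :: "'b \<Rightarrow>\<^sub>0 'k::field"
  assumes group_like: "group_like \<Delta> \<epsilon> x"
begin

lemma cop_point: "cop \<Delta> x = tens x x"
  using group_like by (simp add: group_like_def)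

lemma cou_point: "cou \<epsilon> x = 1"
  using group_like by (simp add: group_like_def)

lemma bracket_point_point_right: "br \<chi> a x x = a"
proof -
  have "br \<chi> a x x = sw2 (tens x x) (\<lambda>p q. br \<chi> a (bvec p) (bvec q))"
    by (rule sw2_tens_bilinear[symmetric]) (intro fs_linear_intros)+
  also have "\<dots> = a"
    using bracket_herd_right[of x a] by (simp add: cop_point cou_point)
  finally show ?thesis .
qed

lemma bracket_point_point_left: "br \<chi> x x a = a"
proof -
  have "br \<chi> x x a = sw2 (tens x x) (\<lambda>p q. br \<chi> (bvec p) (bvec q) a)"
    by (rule sw2_tens_bilinear[symmetric]) (intro fs_linear_intros)+
  also have "\<dots> = a"
    using bracket_herd_left[of x a] by (simp add: cop_point cou_point)
  finally show ?thesis .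
qed

lemma bracket_cancel_point: "br \<chi> c x (br \<chi> x a b) = br \<chi> c a b"
  by (metis bracket_assoc bracket_point_point_right)

lemmas bracket_simps =
  bracket_assoc bracket_point_point_right bracket_point_point_left bracket_cancel_point

lemma cop_bracket_point_left:
  "cop \<Delta> (br \<chi> x v w) = sw2 (cop \<Delta> v) (\<lambda>v1 v2. sw2 (cop \<Delta> w) (\<lambda>w1 w2.
     tens (br \<chi> x (bvec v2) (bvec w1)) (br \<chi> x (bvec v1) (bvec w2))))"
  unfolding cop_bracket[of x] cop_point
  by (rule sw2_tens_bilinear[where G="\<lambda>u1 u2. sw2 (cop \<Delta> v) (\<lambda>v1 v2. sw2 (cop \<Delta> w) (\<lambda>w1 w2.
     tens (br \<chi> u1 (bvec v2) (bvec w1)) (br \<chi> u2 (bvec v1) (bvec w2))))"])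
    (intro fs_linear_intros)+

lemma cop_bracket_point_right:
  "cop \<Delta> (br \<chi> u v x) = sw2 (cop \<Delta> u) (\<lambda>u1 u2. sw2 (cop \<Delta> v) (\<lambda>v1 v2.
     tens (br \<chi> (bvec u1) (bvec v2) x) (br \<chi> (bvec u2) (bvec v1) x)))"
proof -
  have "sw2 (tens x x) (\<lambda>w1 w2. tens (br \<chi> a b (bvec w1)) (br \<chi> a' b' (bvec w2)))
     = tens (br \<chi> a b x) (br \<chi> a' b' x)" for a b a' b'
    by (rule sw2_tens_tens) (intro fs_linear_intros)+
  then show ?thesis
    by (simp add: cop_bracket[of u v x] cop_point del: br_bvec)
qed

lemma cou_bracket_point_left: "cou \<epsilon> (br \<chi> x a b) = cou \<epsilon> a * cou \<epsilon> b"
  by (simp add: cou_bracket cou_point)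

lemma cou_bracket_point_right: "cou \<epsilon> (br \<chi> a b x) = cou \<epsilon> a * cou \<epsilon> b"
  by (simp add: cou_bracket cou_point)

lemma sw2_cop_bracket_point_left:
  assumes "\<And>v. fs_linear (\<lambda>u. G u v)" "\<And>u. fs_linear (G u)"
  shows "sw2 (cop \<Delta> (br \<chi> x a b)) (\<lambda>i j. G (bvec i) (bvec j))
    = sw2 (cop \<Delta> a) (\<lambda>a1 a2. sw2 (cop \<Delta> b) (\<lambda>b1 b2.
        G (br \<chi> x (bvec a2) (bvec b1)) (br \<chi> x (bvec a1) (bvec b2))))"
  using sw2_tens_bilinear[of G, OF assms]
  by (simp add: cop_bracket_point_left sw2_sw2 del: br_bvec)

lemma sw2_cop_bracket_point_right:
  assumes "\<And>v. fs_linear (\<lambda>u. G u v)" "\<And>u. fs_linear (G u)"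
  shows "sw2 (cop \<Delta> (br \<chi> a b x)) (\<lambda>i j. G (bvec i) (bvec j))
    = sw2 (cop \<Delta> a) (\<lambda>a1 a2. sw2 (cop \<Delta> b) (\<lambda>b1 b2.
        G (br \<chi> (bvec a1) (bvec b2) x) (br \<chi> (bvec a2) (bvec b1) x)))"
  using sw2_tens_bilinear[of G, OF assms]
  by (simp add: cop_bracket_point_right sw2_sw2 del: br_bvec)

text \<open>The inverse \<open>\<tau>_a^b \<mapsto> [x,a,b]\<close> (resp. \<open>\<sigma>^a_b \<mapsto> [a,b,x]\<close>), evaluated on a representation
  \<open>\<Sum> l \<tau>_a^b\<close> (resp. \<open>\<Sum> l \<sigma>^a_b\<close>).\<close>

definition rcomb_preimage :: "('k \<times> ('b \<Rightarrow>\<^sub>0 'k) \<times> ('b \<Rightarrow>\<^sub>0 'k)) list \<Rightarrow> ('b \<Rightarrow>\<^sub>0 'k)" where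
  "rcomb_preimage ps = (\<Sum>(l, a, b)\<leftarrow>ps. smult l (br \<chi> x a b))"

definition lcomb_preimage :: "('k \<times> ('b \<Rightarrow>\<^sub>0 'k) \<times> ('b \<Rightarrow>\<^sub>0 'k)) list \<Rightarrow> ('b \<Rightarrow>\<^sub>0 'k)" where
  "lcomb_preimage ps = (\<Sum>(l, a, b)\<leftarrow>ps. smult l (br \<chi> a b x))"

lemma rtr_point_bracket: "rtr \<chi> x (br \<chi> x a b) = rtr \<chi> a b"
  by (auto simp: rtr_def bracket_cancel_point)

lemma rcomb_eq_rtr_point: "rcomb \<chi> ps = rtr \<chi> x (rcomb_preimage ps)"
  by (auto simp: rcomb_def rcomb_preimage_def rtr_def
      fs_linear_map_sum_list[OF fs_linear_br_right[OF fs_linear_id]] bracket_cancel_point)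

lemma lcomb_eq_ltr_point: "lcomb \<chi> ps = ltr \<chi> (lcomb_preimage ps) x"
  by (auto simp: lcomb_def lcomb_preimage_def ltr_def
      fs_linear_map_sum_list[OF fs_linear_br_left[OF fs_linear_id]] bracket_assoc bracket_point_point_left)

lemma inj_rtr_point: "inj (\<lambda>a. rtr \<chi> x a)"
  by (rule injI) (metis rtr_def bracket_point_point_left)

lemma inj_ltr_point: "inj (\<lambda>a. ltr \<chi> a x)"
  by (rule injI) (metis ltr_def bracket_point_point_right)

lemma rcomb_preimage_unique: "rcomb \<chi> ps = rtr \<chi> x a \<Longrightarrow> a = rcomb_preimage ps"
  using inj_rtr_point by (auto simp: rcomb_eq_rtr_point dest: injD)

lemma lcomb_preimage_unique: "lcomb \<chi> ps = ltr \<chi> a x \<Longrightarrow> a = lcomb_preimage ps"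
  using inj_ltr_point by (auto simp: lcomb_eq_ltr_point dest: injD)

lemma range_rtr_point: "range (\<lambda>a. rtr \<chi> x a) = TnR \<chi>"
proof -
  have "rtr \<chi> x a = rcomb \<chi> [(1, x, a)]" for a
    by (auto simp: rcomb_def)
  then show ?thesis
    by (auto simp: TnR_def rcomb_eq_rtr_point)
qed

lemma range_ltr_point: "range (\<lambda>a. ltr \<chi> a x) = TnL \<chi>"
proof -
  have "ltr \<chi> a x = lcomb \<chi> [(1, a, x)]" for a
    by (auto simp: lcomb_def)
  then show ?thesis
    by (auto simp: TnL_def lcomb_eq_ltr_point)
qed

lemma rtr_point_mult: "rtr \<chi> x (br \<chi> a x b) = rtr \<chi> x b \<circ> rtr \<chi> x a"
  by (auto simp: rtr_def bracket_assoc)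

lemma ltr_point_mult: "ltr \<chi> (br \<chi> a x b) x = ltr \<chi> a x \<circ> ltr \<chi> b x"
  by (auto simp: ltr_def bracket_assoc)

lemma rtr_point_point: "rtr \<chi> x x = id"
  by (auto simp: rtr_def bracket_point_point_right)

lemma ltr_point_point: "ltr \<chi> x x = id"
  by (auto simp: ltr_def bracket_point_point_left)

lemma tcounit_rtr_point: "rcomb \<chi> ps = rtr \<chi> x a \<Longrightarrow> tcounit \<epsilon> ps = cou \<epsilon> a"
  by (drule rcomb_preimage_unique) (simp add: rcomb_preimage_def tcounit_def mult.assoc
      fs_functional_map_sum_list[OF fs_functional_cou] cou_bracket_point_left)

lemma tcounit_ltr_point: "lcomb \<chi> ps = ltr \<chi> a x \<Longrightarrow> tcounit \<epsilon> ps = cou \<epsilon> a"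
  by (drule lcomb_preimage_unique) (simp add: lcomb_preimage_def tcounit_def mult.assoc
      fs_functional_map_sum_list[OF fs_functional_cou] cou_bracket_point_right)

lemma coproduct_rtr_point_bracket:
  "sw2 (cop \<Delta> (br \<chi> x a b)) (\<lambda>i j. tens (rtr \<chi> x (bvec i) (bvec c)) (rtr \<chi> x (bvec j) (bvec d)))
   = sw2 (cop \<Delta> a) (\<lambda>a1 a2. sw2 (cop \<Delta> b) (\<lambda>b1 b2.
       tens (rtr \<chi> (bvec a2) (bvec b1) (bvec c)) (rtr \<chi> (bvec a1) (bvec b2) (bvec d))))"
  unfolding rtr_def
  by (subst sw2_cop_bracket_point_left) (intro fs_linear_intros | simp add: bracket_cancel_point)+

lemma coproduct_ltr_bracket_point:
  "sw2 (cop \<Delta> (br \<chi> a b x)) (\<lambda>i j. tens (ltr \<chi> (bvec i) x (bvec c)) (ltr \<chi> (bvec j) x (bvec d)))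
   = sw2 (cop \<Delta> a) (\<lambda>a1 a2. sw2 (cop \<Delta> b) (\<lambda>b1 b2.
       tens (ltr \<chi> (bvec a1) (bvec b2) (bvec c)) (ltr \<chi> (bvec a2) (bvec b1) (bvec d))))"
  unfolding ltr_def
  by (subst sw2_cop_bracket_point_right)
    (intro fs_linear_intros | simp add: bracket_assoc bracket_point_point_left)+

lemma rcoprod_rtr_point:
  "rcomb \<chi> ps = rtr \<chi> x a \<Longrightarrow> rcoprod \<Delta> \<chi> ps c d
     = sw2 (cop \<Delta> a) (\<lambda>i j. tens (rtr \<chi> x (bvec i) (bvec c)) (rtr \<chi> x (bvec j) (bvec d)))"
  by (drule rcomb_preimage_unique)
    (simp add: rcomb_preimage_def rcoprod_def coproduct_rtr_point_bracket
      fs_linear_map_sum_list[OF fs_linear_sw2_left[OF fs_linear_cop[OF fs_linear_id]]] del: br_bvec)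

lemma lcoprod_ltr_point:
  "lcomb \<chi> ps = ltr \<chi> a x \<Longrightarrow> lcoprod \<Delta> \<chi> ps c d
     = sw2 (cop \<Delta> a) (\<lambda>i j. tens (ltr \<chi> (bvec i) x (bvec c)) (ltr \<chi> (bvec j) x (bvec d)))"
  by (drule lcomb_preimage_unique)
    (simp add: lcomb_preimage_def lcoprod_def coproduct_ltr_bracket_point
      fs_linear_map_sum_list[OF fs_linear_sw2_left[OF fs_linear_cop[OF fs_linear_id]]] del: br_bvec)

text \<open>The antipode \<open>a \<mapsto> [x,a,x]\<close> of \<open>H_x(C)\<close>, transported along \<open>a \<mapsto> \<tau>_x^a\<close>
  (resp. \<open>a \<mapsto> \<sigma>^a_x\<close>); the preimage of \<open>f\<close> is recovered as \<open>f x\<close>.\<close>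

definition rtr_antipode :: "(('b \<Rightarrow>\<^sub>0 'k) \<Rightarrow> ('b \<Rightarrow>\<^sub>0 'k)) \<Rightarrow> ('b \<Rightarrow>\<^sub>0 'k) \<Rightarrow> ('b \<Rightarrow>\<^sub>0 'k)" where
  "rtr_antipode f = rtr \<chi> x (br \<chi> x (f x) x)"

definition ltr_antipode :: "(('b \<Rightarrow>\<^sub>0 'k) \<Rightarrow> ('b \<Rightarrow>\<^sub>0 'k)) \<Rightarrow> ('b \<Rightarrow>\<^sub>0 'k) \<Rightarrow> ('b \<Rightarrow>\<^sub>0 'k)" where
  "ltr_antipode f = ltr \<chi> (br \<chi> x (f x) x) x"

lemma rtr_antipode_in_TnR: "rtr_antipode f \<in> TnR \<chi>"
  using range_rtr_point by (auto simp: rtr_antipode_def)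

lemma ltr_antipode_in_TnL: "ltr_antipode f \<in> TnL \<chi>"
  using range_ltr_point by (auto simp: ltr_antipode_def)

lemma op_linear_on_rtr_antipode: "op_linear_on T rtr_antipode"
  unfolding op_linear_on_def rtr_antipode_def rtr_def
  by (simp add: fs_linear_map_add[OF fs_linear_br_middle[OF fs_linear_id]]
      fs_linear_map_add[OF fs_linear_br_right[OF fs_linear_id]]
      fs_linear_map_smult[OF fs_linear_br_middle[OF fs_linear_id]]
      fs_linear_map_smult[OF fs_linear_br_right[OF fs_linear_id]])

lemma op_linear_on_ltr_antipode: "op_linear_on T ltr_antipode"
  unfolding op_linear_on_def ltr_antipode_def ltr_def
  by (auto simp: fs_linear_map_add[OF fs_linear_br_middle[OF fs_linear_id]]
      fs_linear_map_add[OF fs_linear_br_left[OF fs_linear_id]]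
      fs_linear_map_smult[OF fs_linear_br_middle[OF fs_linear_id]]
      fs_linear_map_smult[OF fs_linear_br_left[OF fs_linear_id]])

lemma rtr_antipode_left_inverse:
  "sw2 (cop \<Delta> a) (\<lambda>a1 a2. sw2 (cop \<Delta> b) (\<lambda>b1 b2.
     rtr \<chi> (bvec a1) (bvec b2) (rtr_antipode (rtr \<chi> (bvec a2) (bvec b1)) c)))
   = smult (cou \<epsilon> a * cou \<epsilon> b) c"
proof -
  have "rtr \<chi> p q (rtr_antipode (rtr \<chi> p' q') c) = br \<chi> c (br \<chi> x p' q') (br \<chi> x p q)" for p q p' q'
    by (simp only: rtr_antipode_def rtr_def bracket_simps)
  then have "sw2 (cop \<Delta> a) (\<lambda>a1 a2. sw2 (cop \<Delta> b) (\<lambda>b1 b2.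
      rtr \<chi> (bvec a1) (bvec b2) (rtr_antipode (rtr \<chi> (bvec a2) (bvec b1)) c)))
    = sw2 (cop \<Delta> (br \<chi> x a b)) (\<lambda>i j. br \<chi> c (bvec i) (bvec j))"
    by (subst sw2_cop_bracket_point_left) (intro fs_linear_intros | simp del: br_bvec)+
  also have "\<dots> = smult (cou \<epsilon> a * cou \<epsilon> b) c"
    by (simp add: bracket_herd_right cou_bracket_point_left)
  finally show ?thesis .
qed

lemma rtr_antipode_right_inverse:
  "sw2 (cop \<Delta> a) (\<lambda>a1 a2. sw2 (cop \<Delta> b) (\<lambda>b1 b2.
     rtr_antipode (rtr \<chi> (bvec a1) (bvec b2)) (rtr \<chi> (bvec a2) (bvec b1) c)))
   = smult (cou \<epsilon> a * cou \<epsilon> b) c"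
proof -
  have "rtr_antipode (rtr \<chi> p q) (rtr \<chi> p' q' c) = br \<chi> c x (br \<chi> (br \<chi> x p' q') (br \<chi> x p q) x)"
    for p q p' q'
    by (simp only: rtr_antipode_def rtr_def bracket_simps)
  then have "sw2 (cop \<Delta> a) (\<lambda>a1 a2. sw2 (cop \<Delta> b) (\<lambda>b1 b2.
      rtr_antipode (rtr \<chi> (bvec a1) (bvec b2)) (rtr \<chi> (bvec a2) (bvec b1) c)))
    = sw2 (cop \<Delta> (br \<chi> x a b)) (\<lambda>i j. br \<chi> c x (br \<chi> (bvec i) (bvec j) x))"
    by (subst sw2_cop_bracket_point_left) (intro fs_linear_intros | simp del: br_bvec)+
  also have "\<dots> = br \<chi> c x (sw2 (cop \<Delta> (br \<chi> x a b)) (\<lambda>i j. br \<chi> (bvec i) (bvec j) x))"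
    by (rule fs_linear_map_sw2[symmetric]) (intro fs_linear_intros)
  also have "\<dots> = smult (cou \<epsilon> a * cou \<epsilon> b) c"
    by (simp add: bracket_herd_left cou_bracket_point_left bracket_point_point_right
        fs_linear_map_smult[OF fs_linear_br_right[OF fs_linear_id]] del: br_bvec)
  finally show ?thesis .
qed

lemma ltr_antipode_left_inverse:
  "sw2 (cop \<Delta> a) (\<lambda>a1 a2. sw2 (cop \<Delta> b) (\<lambda>b1 b2.
     ltr_antipode (ltr \<chi> (bvec a1) (bvec b2)) (ltr \<chi> (bvec a2) (bvec b1) c)))
   = smult (cou \<epsilon> a * cou \<epsilon> b) c"
proof -
  have "ltr_antipode (ltr \<chi> p q) (ltr \<chi> p' q' c) = br \<chi> (br \<chi> x (br \<chi> p q x) (br \<chi> p' q' x)) x c"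
    for p q p' q'
    by (simp only: ltr_antipode_def ltr_def bracket_simps)
  then have "sw2 (cop \<Delta> a) (\<lambda>a1 a2. sw2 (cop \<Delta> b) (\<lambda>b1 b2.
      ltr_antipode (ltr \<chi> (bvec a1) (bvec b2)) (ltr \<chi> (bvec a2) (bvec b1) c)))
    = sw2 (cop \<Delta> (br \<chi> a b x)) (\<lambda>i j. br \<chi> (br \<chi> x (bvec i) (bvec j)) x c)"
    by (subst sw2_cop_bracket_point_right) (intro fs_linear_intros | simp del: br_bvec)+
  also have "\<dots> = br \<chi> (sw2 (cop \<Delta> (br \<chi> a b x)) (\<lambda>i j. br \<chi> x (bvec i) (bvec j))) x c"
    by (rule fs_linear_map_sw2[symmetric]) (intro fs_linear_intros)
  also have "\<dots> = smult (cou \<epsilon> a * cou \<epsilon> b) c"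
    by (simp add: bracket_herd_right cou_bracket_point_right bracket_point_point_left
        fs_linear_map_smult[OF fs_linear_br_left[OF fs_linear_id]] del: br_bvec)
  finally show ?thesis .
qed

lemma ltr_antipode_right_inverse:
  "sw2 (cop \<Delta> a) (\<lambda>a1 a2. sw2 (cop \<Delta> b) (\<lambda>b1 b2.
     ltr \<chi> (bvec a1) (bvec b2) (ltr_antipode (ltr \<chi> (bvec a2) (bvec b1)) c)))
   = smult (cou \<epsilon> a * cou \<epsilon> b) c"
proof -
  have "ltr \<chi> p q (ltr_antipode (ltr \<chi> p' q') c) = br \<chi> (br \<chi> (br \<chi> p q x) (br \<chi> p' q' x) x) x c"
    for p q p' q'
    by (simp only: ltr_antipode_def ltr_def bracket_simps)
  then have "sw2 (cop \<Delta> a) (\<lambda>a1 a2. sw2 (cop \<Delta> b) (\<lambda>b1 b2.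
      ltr \<chi> (bvec a1) (bvec b2) (ltr_antipode (ltr \<chi> (bvec a2) (bvec b1)) c)))
    = sw2 (cop \<Delta> (br \<chi> a b x)) (\<lambda>i j. br \<chi> (br \<chi> (bvec i) (bvec j) x) x c)"
    by (subst sw2_cop_bracket_point_right) (intro fs_linear_intros | simp del: br_bvec)+
  also have "\<dots> = br \<chi> (sw2 (cop \<Delta> (br \<chi> a b x)) (\<lambda>i j. br \<chi> (bvec i) (bvec j) x)) x c"
    by (rule fs_linear_map_sw2[symmetric]) (intro fs_linear_intros)
  also have "\<dots> = smult (cou \<epsilon> a * cou \<epsilon> b) c"
    by (simp add: bracket_herd_left cou_bracket_point_right bracket_point_point_left
        fs_linear_map_smult[OF fs_linear_br_left[OF fs_linear_id]] del: br_bvec)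
  finally show ?thesis .
qed

lemma TnR_has_antipode:
  "\<exists>S. (\<forall>f\<in>TnR \<chi>. S f \<in> TnR \<chi>) \<and> op_linear_on (TnR \<chi>) S \<and>
     (\<forall>a b c. sw2 (cop \<Delta> a) (\<lambda>a1 a2. sw2 (cop \<Delta> b) (\<lambda>b1 b2.
        rtr \<chi> (bvec a1) (bvec b2) (S (rtr \<chi> (bvec a2) (bvec b1)) c)))
      = smult (cou \<epsilon> a * cou \<epsilon> b) c) \<and>
     (\<forall>a b c. sw2 (cop \<Delta> a) (\<lambda>a1 a2. sw2 (cop \<Delta> b) (\<lambda>b1 b2.
        S (rtr \<chi> (bvec a1) (bvec b2)) (rtr \<chi> (bvec a2) (bvec b1) c)))
      = smult (cou \<epsilon> a * cou \<epsilon> b) c)"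
  by (intro exI[of _ rtr_antipode] conjI allI ballI rtr_antipode_in_TnR op_linear_on_rtr_antipode
      rtr_antipode_left_inverse rtr_antipode_right_inverse)

lemma TnL_has_antipode:
  "\<exists>S. (\<forall>f\<in>TnL \<chi>. S f \<in> TnL \<chi>) \<and> op_linear_on (TnL \<chi>) S \<and>
     (\<forall>a b c. sw2 (cop \<Delta> a) (\<lambda>a1 a2. sw2 (cop \<Delta> b) (\<lambda>b1 b2.
        S (ltr \<chi> (bvec a1) (bvec b2)) (ltr \<chi> (bvec a2) (bvec b1) c)))
      = smult (cou \<epsilon> a * cou \<epsilon> b) c) \<and>
     (\<forall>a b c. sw2 (cop \<Delta> a) (\<lambda>a1 a2. sw2 (cop \<Delta> b) (\<lambda>b1 b2.
        ltr \<chi> (bvec a1) (bvec b2) (S (ltr \<chi> (bvec a2) (bvec b1)) c)))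
      = smult (cou \<epsilon> a * cou \<epsilon> b) c)"
  by (intro exI[of _ ltr_antipode] conjI allI ballI ltr_antipode_in_TnL op_linear_on_ltr_antipode
      ltr_antipode_left_inverse ltr_antipode_right_inverse)

end

theorem mainTheorem5:
  fixes \<Delta> :: "'b \<Rightarrow> ('b \<times> 'b \<Rightarrow>\<^sub>0 'k::field)"
    and \<epsilon> :: "'b \<Rightarrow> 'k"
    and \<chi> :: "'b \<Rightarrow> 'b \<Rightarrow> 'b \<Rightarrow> ('b \<Rightarrow>\<^sub>0 'k)"
    and x :: "'b \<Rightarrow>\<^sub>0 'k"
  assumes "hopf_heap \<Delta> \<epsilon> \<chi>" and "group_like \<Delta> \<epsilon> x"
  shows
    \<comment> \<open>H_x(C) \<cong> Tn^r C via a \<mapsto> \<tau>_x^a, with inverse \<tau>_a^b \<mapsto> [x,a,b]\<close>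
    "inj (\<lambda>a. rtr \<chi> x a) \<and> range (\<lambda>a. rtr \<chi> x a) = TnR \<chi> \<and>
     (\<forall>a b. rtr \<chi> x (br \<chi> x a b) = rtr \<chi> a b) \<and>
     (\<forall>a b. rtr \<chi> x (br \<chi> a x b) = rtr \<chi> x b \<circ> rtr \<chi> x a) \<and>
     rtr \<chi> x x = id \<and>
     (\<forall>a ps. rcomb \<chi> ps = rtr \<chi> x a \<longrightarrow>
        (\<forall>c d. rcoprod \<Delta> \<chi> ps c d =
            sw2 (cop \<Delta> a) (\<lambda>i j. tens (rtr \<chi> x (bvec i) (bvec c)) (rtr \<chi> x (bvec j) (bvec d)))) \<and>
        tcounit \<epsilon> ps = cou \<epsilon> a) \<and>
    \<comment> \<open>H_x(C) \<cong> Tn^l C via a \<mapsto> \<sigma>^a_x\<close>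
     inj (\<lambda>a. ltr \<chi> a x) \<and> range (\<lambda>a. ltr \<chi> a x) = TnL \<chi> \<and>
     (\<forall>a b. ltr \<chi> (br \<chi> a x b) x = ltr \<chi> a x \<circ> ltr \<chi> b x) \<and>
     ltr \<chi> x x = id \<and>
     (\<forall>a ps. lcomb \<chi> ps = ltr \<chi> a x \<longrightarrow>
        (\<forall>c d. lcoprod \<Delta> \<chi> ps c d =
            sw2 (cop \<Delta> a) (\<lambda>i j. tens (ltr \<chi> (bvec i) x (bvec c)) (ltr \<chi> (bvec j) x (bvec d)))) \<and>
        tcounit \<epsilon> ps = cou \<epsilon> a) \<and>
    \<comment> \<open>Tn^r C is a Hopf algebra (product f g = g \<circ> f): it has an antipode\<close>
     (\<exists>S. (\<forall>f\<in>TnR \<chi>. S f \<in> TnR \<chi>) \<and> op_linear_on (TnR \<chi>) S \<and>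
        (\<forall>a b c. sw2 (cop \<Delta> a) (\<lambda>a1 a2. sw2 (cop \<Delta> b) (\<lambda>b1 b2.
             rtr \<chi> (bvec a1) (bvec b2) (S (rtr \<chi> (bvec a2) (bvec b1)) c)))
           = smult (cou \<epsilon> a * cou \<epsilon> b) c) \<and>
        (\<forall>a b c. sw2 (cop \<Delta> a) (\<lambda>a1 a2. sw2 (cop \<Delta> b) (\<lambda>b1 b2.
             S (rtr \<chi> (bvec a1) (bvec b2)) (rtr \<chi> (bvec a2) (bvec b1) c)))
           = smult (cou \<epsilon> a * cou \<epsilon> b) c)) \<and>
    \<comment> \<open>Tn^l C is a Hopf algebra (product = composition): it has an antipode\<close>
     (\<exists>S. (\<forall>f\<in>TnL \<chi>. S f \<in> TnL \<chi>) \<and> op_linear_on (TnL \<chi>) S \<and>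
        (\<forall>a b c. sw2 (cop \<Delta> a) (\<lambda>a1 a2. sw2 (cop \<Delta> b) (\<lambda>b1 b2.
             S (ltr \<chi> (bvec a1) (bvec b2)) (ltr \<chi> (bvec a2) (bvec b1) c)))
           = smult (cou \<epsilon> a * cou \<epsilon> b) c) \<and>
        (\<forall>a b c. sw2 (cop \<Delta> a) (\<lambda>a1 a2. sw2 (cop \<Delta> b) (\<lambda>b1 b2.
             ltr \<chi> (bvec a1) (bvec b2) (S (ltr \<chi> (bvec a2) (bvec b1)) c)))
           = smult (cou \<epsilon> a * cou \<epsilon> b) c))"
proof -
  interpret pointed_hopf_heap \<Delta> \<epsilon> \<chi> x
    by unfold_locales (fact assms)+
  show ?thesis
    by (intro conjI allI impI inj_rtr_point range_rtr_point rtr_point_bracket rtr_point_mult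
        rtr_point_point inj_ltr_point range_ltr_point ltr_point_mult ltr_point_point
        TnR_has_antipode TnL_has_antipode)
      (erule rcoprod_rtr_point tcounit_rtr_point lcoprod_ltr_point tcounit_ltr_point)+
qed

end
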